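(* Let $T$ be a tableau of shape $(2,1^{|T|-2})$ with $|T|\ge 2$ and distinct positive entries, and let $n$ be such that $T[n]$ (of shape $(n-|T|,2,1^{|T|-2})$, a near-hook) is a standard Young tableau. Suppose any two entries of $T$ differ by at least $2$, and $2$ and $n$ are not both entries of $T$. Then $\mathrm{pr}(T[n])$ divides $(|T|-1)(n-1)$.
   Context: Tableaux have distinct entries increasing along rows and down columns. For a tableau $T$ with distinct positive entries, $T[n]$ is obtained by placing above $T$ a new top row consisting of all elements of $\{1,\dots,n\}$ not in $T$, in increasing order. Promotion $\mathcal P$ of a tableau with distinct entries $i_1<\dots<i_m$: (1) remove the top-left entry, leaving an empty box; (2) while the empty box has a box to its right or below, slide into it the smaller of the entries of those boxes; (3) then replace each remaining entry $i_k$ by $i_{k-1}$; (4) place $i_m$ in the empty box. $\mathrm{pr}(T)$ is the least $t\ge1$ with $\mathcal P^t(T)=T$. *)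

theory Defs
  imports Main
begin

text \<open>A tableau is represented as a list of rows (top row first); row r, column c
  holds the entry T!r!c. Cells are (r,c) with r < length T and c < length (T!r).\<close>

type_synonym tableau = "nat list list"

definition entries :: "tableau \<Rightarrow> nat set" where
  "entries T = set (concat T)"

definition tsize :: "tableau \<Rightarrow> nat" where
  "tsize T = length (concat T)"

definition partition_shape :: "tableau \<Rightarrow> bool" where
  "partition_shape T \<longleftrightarrow> (\<forall>r < length T. 0 < length (T!r)) \<and>
     (\<forall>r. r + 1 < length T \<longrightarrow> length (T!(r+1)) \<le> length (T!r))"

definition is_tableau :: "tableau \<Rightarrow> bool" where
  "is_tableau T \<longleftrightarrow> partition_shape T \<and> distinct (concat T) \<and>
     (\<forall>r < length T. sorted_wrt (<) (T!r)) \<and>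
     (\<forall>r c. r + 1 < length T \<and> c < length (T!(r+1)) \<longrightarrow> T!r!c < T!(r+1)!c)"

definition is_SYT :: "nat \<Rightarrow> tableau \<Rightarrow> bool" where
  "is_SYT n T \<longleftrightarrow> is_tableau T \<and> entries T = {1..n}"

definition shape_2_1s :: "tableau \<Rightarrow> bool" where
  "shape_2_1s T \<longleftrightarrow> length T \<ge> 1 \<and> length (T!0) = 2 \<and>
     (\<forall>r. 1 \<le> r \<and> r < length T \<longrightarrow> length (T!r) = 1)"

definition extend :: "nat \<Rightarrow> tableau \<Rightarrow> tableau" where
  "extend n T = sorted_list_of_set ({1..n} - entries T) # T"

text \<open>Jeu de taquin slide of the empty box at (r,c); the value stored at the empty
  box is irrelevant. The fuel argument bounds the number of slides; it is always
  taken large enough (each slide increases r+c).\<close>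
fun slide :: "nat \<Rightarrow> tableau \<Rightarrow> nat \<times> nat \<Rightarrow> tableau \<times> (nat \<times> nat)" where
  "slide 0 T rc = (T, rc)"
| "slide (Suc k) T (r, c) =
     (let right = (c + 1 < length (T!r));
          down = (r + 1 < length T \<and> c < length (T!(r+1)))
      in if \<not> right \<and> \<not> down then (T, (r, c))
         else if right \<and> (\<not> down \<or> T!r!(c+1) < T!(r+1)!c)
         then slide k (T[r := (T!r)[c := T!r!(c+1)]]) (r, c + 1)
         else slide k (T[r := (T!r)[c := T!(r+1)!c]]) (r + 1, c))"

definition prev_entry :: "tableau \<Rightarrow> nat \<Rightarrow> nat" where
  "prev_entry T x = Max {y \<in> entries T. y < x}"

definition promotion :: "tableau \<Rightarrow> tableau" where
  "promotion T =
     (let (T', (r, c)) = slide (length T + tsize T) T (0, 0);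
          T'' = map (map (prev_entry T)) T'
      in T''[r := (T''!r)[c := Max (entries T)]])"

definition pr :: "tableau \<Rightarrow> nat" where
  "pr T = (LEAST t. t \<ge> 1 \<and> (promotion ^^ t) T = T)"

end

theory Submission
  imports Defs
begin

(*
  Write S for the entry set of T and b for its entry in position (0,1). Then S \<subseteq> {2..n}, and
  T[n] is determined by the pair (S, b). Computing the jeu de taquin slide shows that promotion
  turns T[n] into T'[n], where T' has entry set rot ` S for the cyclic permutation
  rot: 2 \<mapsto> n, x \<mapsto> x - 1 of {2..n}, and b becomes b - 1, or n when 2 \<in> S and b is the second
  smallest element of S. This description needs that no two elements of S are neighbours on
  the cycle of rot, which is what the separation hypotheses say, and this property is invariant.

  Since rot has order n - 1, the entry set returns after N = (|T| - 1)(n - 1) steps. For b, its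
  rank r in S lies between 1 and |T| - 1; a step lowers r by one when 2 \<in> S (rank 1 wrapping
  around to |T| - 1) and fixes it otherwise, while the sum of S drops by |T| and gains n - 1
  when 2 \<in> S. Hence (n - 1) r + \<Sum>S + |T| t is constant modulo (n - 1)(|T| - 1) along the
  orbit, and at t = N this forces r, hence b, back to its initial value.
*)

lemma Least_funpow_period_dvd:
  assumes "0 < N" "(f ^^ N) x = x"
  shows "(LEAST t. 1 \<le> t \<and> (f ^^ t) x = x) dvd N"
proof -
  define p where "p = (LEAST t. 1 \<le> t \<and> (f ^^ t) x = x)"
  have p: "1 \<le> p" "(f ^^ p) x = x"
    using LeastI[of "\<lambda>t. 1 \<le> t \<and> (f ^^ t) x = x" N] assms unfolding p_def by auto
  have "(f ^^ (N mod p)) x = x" using funpow_mod_eq[OF p(2)] assms(2) by simp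
  moreover have "N mod p < p" using p(1) by simp
  ultimately have "N mod p = 0"
    using Least_le[of "\<lambda>t. 1 \<le> t \<and> (f ^^ t) x = x" "N mod p"] unfolding p_def by fastforce
  then show ?thesis unfolding p_def[symmetric] by auto
qed

lemma sorted_list_of_set_eqI:
  "sorted_wrt (<) xs \<Longrightarrow> set xs = A \<Longrightarrow> sorted_list_of_set A = xs"
  by (metis sorted_list_of_set.idem_if_sorted_distinct strict_sorted_iff)

lemma sorted_list_of_set_Min_Cons:
  "finite A \<Longrightarrow> a \<in> A \<Longrightarrow> \<forall>x \<in> A. a \<le> x \<Longrightarrow>
    sorted_list_of_set A = a # sorted_list_of_set (A - {a})"
  using sorted_list_of_set_nonempty[of A] Min_eqI[of A a] by auto

lemma sorted_list_of_set_remove_eq_Min_Cons: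
  assumes "finite S" "a \<in> S" "a < b"
  shows "sorted_list_of_set (S - {b}) = Min S # sorted_list_of_set (S - {b} - {Min S})"
proof (rule sorted_list_of_set_Min_Cons)
  have "Min S \<in> S" "Min S \<le> a" using assms(1,2) by (auto intro: Min_in)
  then show "Min S \<in> S - {b}" using assms(3) by simp
qed (use assms in auto)

lemma sorted_wrt_map_decrement:
  "sorted_wrt (<) xs \<Longrightarrow> 0 \<notin> set xs \<Longrightarrow> sorted_wrt (<) (map (\<lambda>x. x - 1 :: nat) xs)"
  by (induction xs) auto

section \<open>The cyclic relabelling of {2..n}\<close>

definition rot :: "nat \<Rightarrow> nat \<Rightarrow> nat" where
  "rot n x = (if x = 2 then n else x - 1)"

lemma rot_in_range: "2 \<le> n \<Longrightarrow> x \<in> {2..n} \<Longrightarrow> rot n x \<in> {2..n}"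
  by (auto simp: rot_def)

lemma inj_on_rot: "inj_on (rot n) {2..n}"
  by (rule inj_onI) (auto simp: rot_def split: if_splits)

lemma bij_betw_rot: "2 \<le> n \<Longrightarrow> bij_betw (rot n) {2..n} {2..n}"
proof -
  assume "2 \<le> n"
  then have "rot n ` {2..n} \<subseteq> {2..n}" by (auto intro: rot_in_range)
  moreover have "card (rot n ` {2..n}) = card {2..n}"
    using inj_on_rot by (rule card_image)
  ultimately show ?thesis
    using inj_on_rot by (simp add: bij_betw_def card_subset_eq)
qed

lemma rot_image_compl:
  assumes "2 \<le> n" "S \<subseteq> {2..n}"
  shows "{2..n} - rot n ` S = rot n ` ({2..n} - S)"
  using bij_betw_rot[OF assms(1)] assms(2)
  by (metis bij_betw_imp_surj_on inj_on_image_set_diff inj_on_rot Diff_subset)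

lemma rot_image_remove:
  "S \<subseteq> {2..n} \<Longrightarrow> b \<in> S \<Longrightarrow> rot n ` S - {rot n b} = rot n ` (S - {b})"
  by (subst inj_on_image_set_diff[OF inj_on_rot]) auto

lemma card_rot_image: "S \<subseteq> {2..n} \<Longrightarrow> card (rot n ` S) = card S"
  by (meson card_image inj_on_rot inj_on_subset)

lemma rot_image_separated:
  assumes "S \<subseteq> {2..n}" "2 \<le> n" "\<forall>x \<in> S. rot n x \<notin> S"
  shows "\<forall>y \<in> rot n ` S. rot n y \<notin> rot n ` S"
proof (intro ballI notI)
  fix y assume "y \<in> rot n ` S" "rot n y \<in> rot n ` S"
  then obtain x z where "x \<in> S" "z \<in> S" "y = rot n x" "rot n (rot n x) = rot n z" by auto
  moreover have "rot n x \<in> {2..n}" using \<open>x \<in> S\<close> assms(1,2) rot_in_range by blast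
  ultimately have "rot n x = z" using assms(1) inj_onD[OF inj_on_rot] by blast
  then show False using assms(3) \<open>x \<in> S\<close> \<open>z \<in> S\<close> by blast
qed

lemma sorted_list_of_set_rot_image:
  assumes "A \<subseteq> {2..n}"
  shows "sorted_list_of_set (rot n ` A) =
    map (\<lambda>x. x - 1) (sorted_list_of_set (A - {2})) @ (if 2 \<in> A then [n] else [])"
proof (rule sorted_list_of_set_eqI)
  have fin: "finite (A - {2})" using assms finite_subset by blast
  have "\<forall>x \<in> A - {2}. 3 \<le> x \<and> x \<le> n" using assms by auto
  then show "set (map (\<lambda>x. x - 1) (sorted_list_of_set (A - {2})) @ (if 2 \<in> A then [n] else [])) = rot n ` A"
    using fin by (auto simp: rot_def image_iff)
  have "sorted_wrt (<) (map (\<lambda>x. x - 1) (sorted_list_of_set (A - {2})))"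
    using fin assms by (intro sorted_wrt_map_decrement) auto
  then show "sorted_wrt (<) (map (\<lambda>x. x - 1) (sorted_list_of_set (A - {2})) @ (if 2 \<in> A then [n] else []))"
    using fin assms by (force simp: sorted_wrt_append)
qed

lemma sorted_list_of_set_compl_rot_image:
  assumes "2 \<le> n" "S \<subseteq> {2..n}"
  shows "sorted_list_of_set ({2..n} - rot n ` S) =
    map (\<lambda>x. x - 1) (sorted_list_of_set ({2..n} - S - {2})) @ (if 2 \<in> S then [] else [n])"
  using rot_image_compl[OF assms] sorted_list_of_set_rot_image[of "{2..n} - S" n] assms(1) by simp

lemma sorted_list_of_set_rot_image_remove:
  assumes "S \<subseteq> {2..n}" "b \<in> S"
  shows "sorted_list_of_set (rot n ` S - {rot n b}) =
    map (\<lambda>x. x - 1) (sorted_list_of_set (S - {b} - {2})) @ (if 2 \<in> S - {b} then [n] else [])"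
  unfolding rot_image_remove[OF assms] by (rule sorted_list_of_set_rot_image) (use assms(1) in blast)

lemma funpow_rot_below:
  "k + 2 \<le> x \<Longrightarrow> (rot n ^^ k) x = x - k"
  by (induction k) (auto simp: rot_def)

lemma funpow_rot_period:
  assumes "x \<in> {2..n}"
  shows "(rot n ^^ (n - 1)) x = x"
proof -
  have x: "2 \<le> x" "x \<le> n" using assms by auto
  have to_2: "(rot n ^^ (x - 2)) x = 2" and from_n: "(rot n ^^ (n - x)) n = x"
    by (subst funpow_rot_below; use x in auto)+
  have "n - 1 = (n - x) + 1 + (x - 2)" using assms by auto
  then have "(rot n ^^ (n - 1)) x = (rot n ^^ (n - x)) ((rot n ^^ 1) ((rot n ^^ (x - 2)) x))"
    by (simp only: funpow_add o_apply)
  also have "\<dots> = x"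
    by (simp add: to_2 from_n rot_def)
  finally show ?thesis .
qed

lemma funpow_rot_mult_period:
  assumes "x \<in> {2..n}"
  shows "(rot n ^^ (k * (n - 1))) x = x"
  using funpow_mod_eq[where f = "rot n" and n = "n - 1" and m = "k * (n - 1)"]
    funpow_rot_period[OF assms] by simp

lemma sum_rot_image:
  assumes "S \<subseteq> {2..n}"
  shows "(\<Sum>x \<in> rot n ` S. int x) = (\<Sum>x \<in> S. int x) - int (card S) + (if 2 \<in> S then int n - 1 else 0)"
proof -
  have fin: "finite S" using assms finite_subset by blast
  have "(\<Sum>x \<in> rot n ` S. int x) = (\<Sum>x \<in> S. int (rot n x))"
    using inj_on_subset[OF inj_on_rot assms] by (simp add: sum.reindex)
  also have "\<dots> = (\<Sum>x \<in> S. (int x - 1) + (if x = 2 then int n - 1 else 0))"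
    using assms by (intro sum.cong) (auto simp: rot_def)
  also have "\<dots> = (\<Sum>x \<in> S. int x) - int (card S) + (if 2 \<in> S then int n - 1 else 0)"
    using fin by (simp add: sum.distrib sum_subtractf)
  finally show ?thesis .
qed

section \<open>Promotion of near-hook tableaux\<close>

lemma slide_along_row:
  assumes "length P \<ge> length (R!0) \<or> R = []" "k > length xs"
  shows "slide k ((P @ x # xs) # R) (0, length P) =
    ((P @ xs @ [last (x # xs)]) # R, (0, length P + length xs))"
  using assms
proof (induction xs arbitrary: P x k)
  case Nil
  then obtain k' where "k = Suc k'" by (cases k) auto
  then show ?case using Nil by auto
next
  case (Cons y ys)
  then obtain k' where k: "k = Suc k'" by (cases k) auto
  have "slide k ((P @ x # y # ys) # R) (0, length P) =
      slide k' (((P @ [y]) @ y # ys) # R) (0, length (P @ [y]))"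
    using Cons.prems by (auto simp: k nth_append list_update_append)
  also have "\<dots> = (((P @ [y]) @ ys @ [last (y # ys)]) # R, (0, length (P @ [y]) + length ys))"
    using Cons.prems by (intro Cons.IH) (auto simp: k)
  finally show ?case by simp
qed

lemma slide_down_column:
  assumes "k > length xs"
  shows "slide k (A @ map (\<lambda>z. [z]) (x # xs)) (length A, 0) =
    (A @ map (\<lambda>z. [z]) (xs @ [last (x # xs)]), (length A + length xs, 0))"
  using assms
proof (induction xs arbitrary: A x k)
  case Nil
  then obtain k' where "k = Suc k'" by (cases k) auto
  then show ?case using Nil by (auto simp: nth_append)
next
  case (Cons y ys)
  then obtain k' where k: "k = Suc k'" by (cases k) auto
  have "slide k (A @ map (\<lambda>z. [z]) (x # y # ys)) (length A, 0) =
      slide k' ((A @ [[y]]) @ map (\<lambda>z. [z]) (y # ys)) (length (A @ [[y]]), 0)"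
    using Cons.prems by (auto simp: k nth_append list_update_append)
  also have "\<dots> = ((A @ [[y]]) @ map (\<lambda>z. [z]) (ys @ [last (y # ys)]), (length (A @ [[y]]) + length ys, 0))"
    using Cons.prems by (intro Cons.IH) (auto simp: k)
  finally show ?case by simp
qed

lemma prev_entry_interval:
  assumes "entries U = {1..n}" "2 \<le> x" "x \<le> n"
  shows "prev_entry U x = x - 1"
proof -
  have "{y \<in> entries U. y < x} = {1..x - 1}" using assms by auto
  then show ?thesis unfolding prev_entry_def using assms(2) by (simp add: Max_eq_iff)
qed

lemma promotion_by_slide:
  assumes "entries U = {1..n}" "slide (length U + tsize U) U (0, 0) = (U', (r, c))"
    and "set (concat U') \<subseteq> {2..n}" "0 < n"
  shows "promotion U = (let V = map (map (\<lambda>x. x - 1)) U' in V[r := (V!r)[c := n]])"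
proof -
  have decrement: "map (map (prev_entry U)) U' = map (map (\<lambda>x. x - 1)) U'"
    using assms(3) by (intro map_cong refl) (use prev_entry_interval[OF assms(1)] in force)
  have max: "Max (entries U) = n"
    using assms(1,4) by (auto simp: Max_eq_iff)
  have "promotion U =
      (let V = map (map (prev_entry U)) U' in V[r := (V!r)[c := Max (entries U)]])"
    unfolding promotion_def using assms(2) by simp
  then show ?thesis by (simp only: decrement max)
qed

lemma promotion_hole_along_top_row:
  assumes "entries ((1 # 2 # t # ts) # [c, b] # map (\<lambda>z. [z]) cs) = {1..n}"
    and "2 < c" "t < b" "2 \<le> t" "\<forall>x \<in> set ts. 2 \<le> x" "\<forall>x \<in> set cs. 2 \<le> x"
  shows "promotion ((1 # 2 # t # ts) # [c, b] # map (\<lambda>z. [z]) cs) =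
    (map (\<lambda>x. x - 1) (2 # t # ts) @ [n]) # [c - 1, b - 1] # map (\<lambda>z. [z]) (map (\<lambda>x. x - 1) cs)"
    (is "promotion ?U = _")
proof -
  obtain k where k: "length ?U + tsize ?U = Suc (Suc k)" "k > length ts"
    by (auto simp: tsize_def)
  have "slide (Suc (Suc k)) ?U (0, 0) = slide k (([2, t] @ t # ts) # [c, b] # map (\<lambda>z. [z]) cs) (0, length [2, t])"
    using assms by simp
  also have "\<dots> = (([2, t] @ ts @ [last (t # ts)]) # [c, b] # map (\<lambda>z. [z]) cs, (0, length [2, t] + length ts))"
    by (rule slide_along_row) (use k in auto)
  finally have "slide (length ?U + tsize ?U) ?U (0, 0) =
      ((2 # t # ts @ [last (t # ts)]) # [c, b] # map (\<lambda>z. [z]) cs, (0, 2 + length ts))"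
    using k by simp
  moreover have "set (concat ((2 # t # ts @ [last (t # ts)]) # [c, b] # map (\<lambda>z. [z]) cs)) \<subseteq> {2..n}"
    using assms by (auto simp: entries_def)
  moreover have "0 < n" using assms(1) by (auto simp: entries_def)
  ultimately show ?thesis
    using promotion_by_slide[OF assms(1)] by (simp add: list_update_append)
qed

lemma promotion_hole_to_corner:
  assumes "entries ((1 # t # ts) # [2, b] # map (\<lambda>z. [z]) cs) = {1..n}"
    and "2 < t" "2 < b" "\<forall>x \<in> set ts. 2 \<le> x" "\<forall>x \<in> set cs. b < x"
  shows "promotion ((1 # t # ts) # [2, b] # map (\<lambda>z. [z]) cs) =
    (map (\<lambda>x. x - 1) (2 # t # ts)) # [b - 1, n] # map (\<lambda>z. [z]) (map (\<lambda>x. x - 1) cs)"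
    (is "promotion ?U = _")
proof -
  obtain k where k: "length ?U + tsize ?U = Suc (Suc (Suc k))"
    by (auto simp: tsize_def)
  have cs: "\<forall>x \<in> set cs. 2 \<le> x" using assms(3,5) by fastforce
  have "slide (length ?U + tsize ?U) ?U (0, 0) = ((2 # t # ts) # [b, b] # map (\<lambda>z. [z]) cs, (1, 1))"
    using assms unfolding k by (cases cs) auto
  moreover have "set (concat ((2 # t # ts) # [b, b] # map (\<lambda>z. [z]) cs)) \<subseteq> {2..n}"
    using assms cs by (auto simp: entries_def)
  moreover have "0 < n" using assms(1) by (auto simp: entries_def)
  ultimately show ?thesis
    using promotion_by_slide[OF assms(1)] by simp
qed

lemma promotion_hole_down_column:
  assumes "entries ((1 # t # ts) # [2, b] # map (\<lambda>z. [z]) (c # cs)) = {1..n}"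
    and "2 < t" "c < b" "2 \<le> c" "\<forall>x \<in> set ts. 2 \<le> x" "\<forall>x \<in> set cs. 2 \<le> x"
  shows "promotion ((1 # t # ts) # [2, b] # map (\<lambda>z. [z]) (c # cs)) =
    (map (\<lambda>x. x - 1) (2 # t # ts)) # [c - 1, b - 1] # map (\<lambda>z. [z]) (map (\<lambda>x. x - 1) cs @ [n])"
    (is "promotion ?U = _")
proof -
  obtain k where k: "length ?U + tsize ?U = Suc (Suc k)" "k > length cs"
    by (auto simp: tsize_def)
  have "slide (Suc (Suc k)) ?U (0, 0) =
      slide k ([2 # t # ts, [c, b]] @ map (\<lambda>z. [z]) (c # cs)) (length [2 # t # ts, [c, b]], 0)"
    using assms by simp
  also have "\<dots> = ([2 # t # ts, [c, b]] @ map (\<lambda>z. [z]) (cs @ [last (c # cs)]),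
      (length [2 # t # ts, [c, b]] + length cs, 0))"
    by (rule slide_down_column) (use k in auto)
  finally have "slide (length ?U + tsize ?U) ?U (0, 0) =
      ((2 # t # ts) # [c, b] # map (\<lambda>z. [z]) (cs @ [last (c # cs)]), (2 + length cs, 0))"
    using k by simp
  moreover have "set (concat ((2 # t # ts) # [c, b] # map (\<lambda>z. [z]) (cs @ [last (c # cs)]))) \<subseteq> {2..n}"
    using assms by (auto simp: entries_def)
  moreover have "0 < n" using assms(1) by (auto simp: entries_def)
  ultimately show ?thesis
    using promotion_by_slide[OF assms(1)] by (simp add: list_update_append nth_append)
qed

lemma extend_eq_Cons:
  assumes "entries T \<subseteq> {2..n}" "1 \<le> n"
  shows "extend n T = (1 # sorted_list_of_set ({2..n} - entries T)) # T"
proof -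
  let ?X = "{2..n} - entries T"
  have "sorted_list_of_set (insert 1 ?X) = 1 # sorted_list_of_set (insert 1 ?X - {1})"
    by (rule sorted_list_of_set_Min_Cons) auto
  moreover have "{1..n} - entries T = insert 1 ?X" "insert 1 ?X - {1} = ?X" using assms by auto
  ultimately show ?thesis unfolding extend_def by simp
qed

lemma entries_extend: "entries T \<subseteq> {1..n} \<Longrightarrow> entries (extend n T) = {1..n}"
  by (auto simp: extend_def entries_def)

fun hook :: "nat set \<times> nat \<Rightarrow> tableau" where
  "hook (S, b) = (let cs = sorted_list_of_set (S - {b}) in [hd cs, b] # map (\<lambda>z. [z]) (tl cs))"

declare hook.simps [simp del]

lemma hook_eq: "sorted_list_of_set (S - {b}) = c # cs \<Longrightarrow> hook (S, b) = [c, b] # map (\<lambda>z. [z]) cs"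
  by (simp add: hook.simps)

lemma entries_hook:
  assumes "finite S" "b \<in> S" "a \<in> S" "a \<noteq> b"
  shows "entries (hook (S, b)) = S"
proof -
  obtain c cs where "sorted_list_of_set (S - {b}) = c # cs"
    using assms by (cases "sorted_list_of_set (S - {b})") auto
  moreover have "set (sorted_list_of_set (S - {b})) = S - {b}" using assms(1) by simp
  ultimately show ?thesis using assms(2) by (auto simp: entries_def hook_eq)
qed

(* The last conjunct says that no two elements of S are neighbours on the cycle 2, 3, ..., n of
   rot; it is the rotation-invariant form of the separation hypotheses of the theorem. *)
fun admissible :: "nat \<Rightarrow> nat set \<times> nat \<Rightarrow> bool" where
  "admissible n (S, b) \<longleftrightarrow>
    S \<subseteq> {2..n} \<and> b \<in> S \<and> (\<exists>a \<in> S. a < b) \<and> (\<forall>x \<in> S. rot n x \<notin> S)"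

fun promotion_step :: "nat \<Rightarrow> nat set \<times> nat \<Rightarrow> nat set \<times> nat" where
  "promotion_step n (S, b) = (rot n ` S, if 2 \<in> S \<and> b = Min (S - {2}) then n else b - 1)"

lemma admissible_promotion_step:
  assumes "admissible n p"
  shows "admissible n (promotion_step n p)"
proof -
  obtain S b where p: "p = (S, b)" by fastforce
  from assms[unfolded p] have S: "S \<subseteq> {2..n}" and b: "b \<in> S" and sep: "\<forall>x \<in> S. rot n x \<notin> S"
    and below: "\<exists>a \<in> S. a < b" by auto
  have "2 \<le> b" "b \<le> n" using S b by auto
  moreover have "b \<noteq> 2" using S below by (metis atLeastAtMost_iff not_le subsetD)
  ultimately have n: "2 \<le> n" by simp
  have S': "rot n ` S \<subseteq> {2..n}" using S n rot_in_range by blast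
  have sep': "\<forall>y \<in> rot n ` S. rot n y \<notin> rot n ` S" using rot_image_separated[OF S n sep] .
  have "rot n b = b - 1" using \<open>b \<noteq> 2\<close> by (simp add: rot_def)
  then have b': "b - 1 \<in> rot n ` S" using b by (metis image_eqI)
  show ?thesis
  proof (cases "2 \<in> S \<and> b = Min (S - {2})")
    case True
    have "rot n 2 = n" by (simp add: rot_def)
    then have "n \<in> rot n ` S" using True by (metis image_eqI)
    moreover have "b - 1 < n" using \<open>b \<le> n\<close> n by simp
    ultimately show ?thesis
      unfolding p promotion_step.simps if_P[OF True] admissible.simps using S' sep' b' by blast
  next
    case False
    obtain a where a: "a \<in> S - {2}" "a < b"
    proof (cases "2 \<in> S")
      case True
      have fin: "finite (S - {2})" and "b \<in> S - {2}" using S finite_subset b \<open>b \<noteq> 2\<close> by auto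
      then have "Min (S - {2}) \<in> S - {2}" "Min (S - {2}) \<le> b"
        by (metis Min_in empty_iff, simp)
      moreover have "Min (S - {2}) \<noteq> b" using True False by blast
      ultimately show ?thesis using that by simp
    next
      case False
      then show ?thesis using below that by blast
    qed
    then have "rot n a = a - 1" "2 \<le> a" using S by (auto simp: rot_def)
    then have "rot n a \<in> rot n ` S" "rot n a < b - 1" using a by (blast, simp)
    then show ?thesis
      unfolding p promotion_step.simps if_not_P[OF False] admissible.simps using S' sep' b' by blast
  qed
qed

lemma extend_hook:
  assumes "admissible n (S, b)"
  shows "extend n (hook (S, b)) = (1 # sorted_list_of_set ({2..n} - S)) # hook (S, b)"
    and "entries (extend n (hook (S, b))) = {1..n}"
proof -
  obtain a where "a \<in> S" "a < b" using assms by auto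
  then have hook: "entries (hook (S, b)) = S"
    using assms by (intro entries_hook[of S b a]) (auto intro: finite_subset)
  have "1 \<le> n" "S \<subseteq> {2..n}" using assms by auto
  then show "extend n (hook (S, b)) = (1 # sorted_list_of_set ({2..n} - S)) # hook (S, b)"
    using extend_eq_Cons[of "hook (S, b)" n] unfolding hook by blast
  show "entries (extend n (hook (S, b))) = {1..n}"
    using \<open>S \<subseteq> {2..n}\<close> by (intro entries_extend) (auto simp: hook)
qed

lemma sorted_list_of_set_compl_without_2:
  assumes adm: "admissible n (S, b)" and two: "2 \<notin> S"
  obtains t ts where "sorted_list_of_set ({2..n} - S) = 2 # t # ts" "2 \<le> t" "t < b"
    "\<forall>x \<in> set ts. 2 \<le> x"
    and "sorted_list_of_set ({2..n} - rot n ` S) = map (\<lambda>x. x - 1) (t # ts) @ [n]"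
proof -
  from adm have S: "S \<subseteq> {2..n}" and b: "b \<in> S" and sep: "\<forall>x \<in> S. rot n x \<notin> S"
    and "\<exists>a \<in> S. a < b" by auto
  then obtain a where a: "a \<in> S" "a < b" by blast
  have fin: "finite S" using S finite_subset by blast
  define c where "c = Min S"
  have c: "c \<in> S" "c \<le> a" using fin a unfolding c_def by (auto intro: Min_in)
  have "3 \<le> c" using c(1) S two by (cases "c = 2") auto
  \<comment> \<open>By separation, Min S + 1 lies in the top row, which keeps its third entry below b.\<close>
  have "Suc c \<notin> S" using sep c(1) \<open>3 \<le> c\<close> by (auto simp: rot_def)
  then have "Suc c < b" using c a b by (cases "Suc c = b") auto
  define C where "C = {2..n} - S"
  define t where "t = Min (C - {2})"
  define ts where "ts = sorted_list_of_set (C - {2} - {t})"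
  have finC: "finite (C - {2})" unfolding C_def by simp
  have "Suc c \<in> C - {2}"
    using \<open>Suc c < b\<close> \<open>Suc c \<notin> S\<close> b S \<open>3 \<le> c\<close> unfolding C_def by auto
  with finC have t: "t \<in> C - {2}" "t \<le> Suc c"
    unfolding t_def by (metis Min_in empty_iff, simp)
  have row: "sorted_list_of_set (C - {2}) = t # ts"
    unfolding ts_def t_def using finC t by (intro sorted_list_of_set_Min_Cons) (auto simp: t_def)
  have "finite C" "2 \<in> C" "\<forall>x \<in> C. 2 \<le> x" using two b S unfolding C_def by auto
  then have top: "sorted_list_of_set C = 2 # t # ts"
    using sorted_list_of_set_Min_Cons[of C 2] row by simp
  have "2 \<le> t" using t(1) unfolding C_def by simp
  have "t < b" using t(2) \<open>Suc c < b\<close> by simp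
  have "set ts \<subseteq> C" unfolding ts_def using finC by auto
  then have ts: "\<forall>x \<in> set ts. 2 \<le> x" unfolding C_def by auto
  have "2 \<le> n" using S b by auto
  have "sorted_list_of_set ({2..n} - rot n ` S) = map (\<lambda>x. x - 1) (t # ts) @ [n]"
    using sorted_list_of_set_compl_rot_image[OF \<open>2 \<le> n\<close> S] two row unfolding C_def by simp
  with top[unfolded C_def] \<open>2 \<le> t\<close> \<open>t < b\<close> ts show ?thesis by (intro that)
qed

lemma sorted_list_of_set_compl_with_2:
  assumes adm: "admissible n (S, b)" and two: "2 \<in> S"
  obtains t ts where "sorted_list_of_set ({2..n} - S) = t # ts" "2 < t" "\<forall>x \<in> set ts. 2 \<le> x"
    and "sorted_list_of_set ({2..n} - rot n ` S) = map (\<lambda>x. x - 1) (t # ts)"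
proof -
  \<comment> \<open>By separation n is not in S, so the top row of T[n] has an entry besides 1.\<close>
  from adm have S: "S \<subseteq> {2..n}" and "rot n 2 \<notin> S" using two by auto
  then have "n \<in> {2..n} - S" "2 \<le> n" using two by (auto simp: rot_def)
  then have "sorted_list_of_set ({2..n} - S) \<noteq> []" by auto
  then obtain t ts where row: "sorted_list_of_set ({2..n} - S) = t # ts"
    by (meson neq_Nil_conv)
  then have "set (t # ts) = {2..n} - S" by (metis finite_Diff finite_atLeastAtMost set_sorted_list_of_set)
  then have "t \<in> {2..n} - S" "set ts \<subseteq> {2..n} - S" by (metis list.set_intros(1), auto)
  then have t: "2 < t" "\<forall>x \<in> set ts. 2 \<le> x" using two by (metis DiffE atLeastAtMost_iff le_neq_implies_less, auto)
  have "{2..n} - S - {2} = {2..n} - S" using two by blast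
  then have "sorted_list_of_set ({2..n} - rot n ` S) = map (\<lambda>x. x - 1) (t # ts)"
    using sorted_list_of_set_compl_rot_image[OF \<open>2 \<le> n\<close> S] two row by simp
  with row t show ?thesis by (rule that)
qed

lemma promotion_hook_without_2:
  assumes adm: "admissible n (S, b)" and two: "2 \<notin> S"
  shows "promotion (extend n (hook (S, b))) = extend n (hook (rot n ` S, b - 1))"
proof -
  from adm have S: "S \<subseteq> {2..n}" and b: "b \<in> S" and "\<exists>a \<in> S. a < b" by auto
  then obtain a where a: "a \<in> S" "a < b" by blast
  have fin: "finite S" using S finite_subset by blast
  obtain t ts where row: "sorted_list_of_set ({2..n} - S) = 2 # t # ts" "2 \<le> t" "t < b"
      "\<forall>x \<in> set ts. 2 \<le> x"
    and row': "sorted_list_of_set ({2..n} - rot n ` S) = map (\<lambda>x. x - 1) (t # ts) @ [n]"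
    using sorted_list_of_set_compl_without_2[OF adm two] by blast
  define c where "c = Min S"
  define cs where "cs = sorted_list_of_set (S - {b} - {c})"
  have "c \<in> S" using fin a unfolding c_def by (auto intro: Min_in)
  then have "2 < c" using S two by (cases "c = 2") auto
  have col: "sorted_list_of_set (S - {b}) = c # cs"
    unfolding c_def cs_def using fin a by (rule sorted_list_of_set_remove_eq_Min_Cons)
  have U: "extend n (hook (S, b)) = (1 # 2 # t # ts) # [c, b] # map (\<lambda>z. [z]) cs"
    using extend_hook(1)[OF adm] hook_eq[OF col] row(1) by simp
  have "promotion (extend n (hook (S, b))) =
      (map (\<lambda>x. x - 1) (2 # t # ts) @ [n]) # [c - 1, b - 1] # map (\<lambda>z. [z]) (map (\<lambda>x. x - 1) cs)"
    unfolding U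
  proof (rule promotion_hole_along_top_row)
    show "entries ((1 # 2 # t # ts) # [c, b] # map (\<lambda>z. [z]) cs) = {1..n}"
      using extend_hook(2)[OF adm] unfolding U .
    show "\<forall>x \<in> set cs. 2 \<le> x" using fin S unfolding cs_def by auto
  qed (use \<open>2 < c\<close> row in auto)
  also have "\<dots> = extend n (hook (rot n ` S, b - 1))"
  proof -
    have "rot n b = b - 1" "S - {b} - {2} = S - {b}" using b two by (auto simp: rot_def)
    then have col': "sorted_list_of_set (rot n ` S - {b - 1}) = (c - 1) # map (\<lambda>x. x - 1) cs"
      using sorted_list_of_set_rot_image_remove[OF S b] two col by simp
    have adm': "admissible n (rot n ` S, b - 1)" using admissible_promotion_step[OF adm] two by simp
    show ?thesis using extend_hook(1)[OF adm'] row' hook_eq[OF col'] by simp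
  qed
  finally show ?thesis .
qed

lemma promotion_hook_corner:
  assumes adm: "admissible n (S, b)" and two: "2 \<in> S" and corner: "b = Min (S - {2})"
  shows "promotion (extend n (hook (S, b))) = extend n (hook (rot n ` S, n))"
proof -
  from adm have S: "S \<subseteq> {2..n}" and b: "b \<in> S" and "\<exists>a \<in> S. a < b" by auto
  then obtain a where a: "a \<in> S" "a < b" by blast
  have fin: "finite S" using S finite_subset by blast
  have "b \<noteq> 2" using a S by force
  obtain t ts where row: "sorted_list_of_set ({2..n} - S) = t # ts" "2 < t" "\<forall>x \<in> set ts. 2 \<le> x"
    and row': "sorted_list_of_set ({2..n} - rot n ` S) = map (\<lambda>x. x - 1) (t # ts)"
    using sorted_list_of_set_compl_with_2[OF adm two] by blast
  define cs where "cs = sorted_list_of_set (S - {2} - {b})"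
  have "Min S = 2" using fin two S by (intro Min_eqI) auto
  then have col: "sorted_list_of_set (S - {b}) = 2 # cs"
    using sorted_list_of_set_remove_eq_Min_Cons[OF fin a] unfolding cs_def
    by (simp add: Diff_insert2 [symmetric] insert_commute)
  have "b \<in> S - {2}" "\<forall>x \<in> S - {2}. b \<le> x" using b \<open>b \<noteq> 2\<close> fin corner by auto
  then have col': "sorted_list_of_set (S - {2}) = b # cs"
    unfolding cs_def using fin by (intro sorted_list_of_set_Min_Cons) auto
  have "\<forall>x \<in> S - {2} - {b}. b < x"
    using \<open>\<forall>x \<in> S - {2}. b \<le> x\<close> by (metis Diff_iff le_neq_implies_less singletonI)
  then have cs: "\<forall>x \<in> set cs. b < x" unfolding cs_def using fin by simp
  have U: "extend n (hook (S, b)) = (1 # t # ts) # [2, b] # map (\<lambda>z. [z]) cs"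
    using extend_hook(1)[OF adm] hook_eq[OF col] row(1) by simp
  have "promotion (extend n (hook (S, b))) =
      map (\<lambda>x. x - 1) (2 # t # ts) # [b - 1, n] # map (\<lambda>z. [z]) (map (\<lambda>x. x - 1) cs)"
    unfolding U
  proof (rule promotion_hole_to_corner)
    show "entries ((1 # t # ts) # [2, b] # map (\<lambda>z. [z]) cs) = {1..n}"
      using extend_hook(2)[OF adm] unfolding U .
  qed (use row cs a S in auto)
  also have "\<dots> = extend n (hook (rot n ` S, n))"
  proof -
    have "rot n 2 = n" by (simp add: rot_def)
    then have col'': "sorted_list_of_set (rot n ` S - {n}) = (b - 1) # map (\<lambda>x. x - 1) cs"
      using sorted_list_of_set_rot_image_remove[OF S two] col' by simp
    have adm': "admissible n (rot n ` S, n)" using admissible_promotion_step[OF adm] two corner by simp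
    show ?thesis using extend_hook(1)[OF adm'] row' hook_eq[OF col''] by simp
  qed
  finally show ?thesis .
qed

lemma promotion_hook_with_2:
  assumes adm: "admissible n (S, b)" and two: "2 \<in> S" and not_corner: "b \<noteq> Min (S - {2})"
  shows "promotion (extend n (hook (S, b))) = extend n (hook (rot n ` S, b - 1))"
proof -
  from adm have S: "S \<subseteq> {2..n}" and b: "b \<in> S" and "\<exists>a \<in> S. a < b" by auto
  then obtain a where a: "a \<in> S" "a < b" by blast
  have fin: "finite S" using S finite_subset by blast
  have "b \<noteq> 2" using a S by force
  obtain t ts where row: "sorted_list_of_set ({2..n} - S) = t # ts" "2 < t" "\<forall>x \<in> set ts. 2 \<le> x"
    and row': "sorted_list_of_set ({2..n} - rot n ` S) = map (\<lambda>x. x - 1) (t # ts)"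
    using sorted_list_of_set_compl_with_2[OF adm two] by blast
  define R where "R = S - {b} - {2}"
  define c where "c = Min R"
  define cs where "cs = sorted_list_of_set (R - {c})"
  have "Min S = 2" using fin two S by (intro Min_eqI) auto
  then have col: "sorted_list_of_set (S - {b}) = 2 # sorted_list_of_set R"
    using sorted_list_of_set_remove_eq_Min_Cons[OF fin a] unfolding R_def by simp
  have finR: "finite R" unfolding R_def using fin by simp
  have "finite (S - {2})" "b \<in> S - {2}" using fin b \<open>b \<noteq> 2\<close> by auto
  then have "Min (S - {2}) \<in> S - {2}" "Min (S - {2}) \<le> b" by (metis Min_in empty_iff, simp)
  with not_corner have "Min (S - {2}) \<in> R" "Min (S - {2}) < b" unfolding R_def by auto
  then have "c \<in> R" "c \<le> Min (S - {2})" unfolding c_def using finR by (metis Min_in empty_iff, simp)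
  then have c: "c \<in> R" "c < b" using \<open>Min (S - {2}) < b\<close> by auto
  have col': "sorted_list_of_set R = c # cs"
    unfolding cs_def c_def using finR c(1) by (intro sorted_list_of_set_Min_Cons) (auto simp: c_def)
  have "set cs \<subseteq> S" "c \<in> S" using finR c(1) unfolding cs_def R_def by auto
  then have cs: "2 \<le> c" "\<forall>x \<in> set cs. 2 \<le> x" using S by auto
  have U: "extend n (hook (S, b)) = (1 # t # ts) # [2, b] # map (\<lambda>z. [z]) (c # cs)"
    using extend_hook(1)[OF adm] hook_eq[OF col] row(1) col' by simp
  have "promotion (extend n (hook (S, b))) =
      map (\<lambda>x. x - 1) (2 # t # ts) # [c - 1, b - 1] # map (\<lambda>z. [z]) (map (\<lambda>x. x - 1) cs @ [n])"
    unfolding U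
  proof (rule promotion_hole_down_column)
    show "entries ((1 # t # ts) # [2, b] # map (\<lambda>z. [z]) (c # cs)) = {1..n}"
      using extend_hook(2)[OF adm] unfolding U .
  qed (use row c cs in auto)
  also have "\<dots> = extend n (hook (rot n ` S, b - 1))"
  proof -
    have "rot n b = b - 1" using \<open>b \<noteq> 2\<close> by (simp add: rot_def)
    then have col'': "sorted_list_of_set (rot n ` S - {b - 1}) = (c - 1) # map (\<lambda>x. x - 1) cs @ [n]"
      using sorted_list_of_set_rot_image_remove[OF S b] two \<open>b \<noteq> 2\<close> col' unfolding R_def by simp
    have adm': "admissible n (rot n ` S, b - 1)" using admissible_promotion_step[OF adm] not_corner by simp
    show ?thesis using extend_hook(1)[OF adm'] row' hook_eq[OF col''] by simp
  qed
  finally show ?thesis .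
qed

lemma promotion_extend_hook:
  assumes "admissible n p"
  shows "promotion (extend n (hook p)) = extend n (hook (promotion_step n p))"
proof -
  obtain S b where p: "p = (S, b)" by fastforce
  consider "2 \<notin> S" | "2 \<in> S" "b = Min (S - {2})" | "2 \<in> S" "b \<noteq> Min (S - {2})" by blast
  then show ?thesis
    using assms promotion_hook_without_2 promotion_hook_corner promotion_hook_with_2
    unfolding p by cases auto
qed

section \<open>Periodicity\<close>

lemma admissible_funpow_promotion_step:
  "admissible n p \<Longrightarrow> admissible n ((promotion_step n ^^ t) p)"
  by (induction t) (simp_all add: admissible_promotion_step del: admissible.simps)

lemma funpow_promotion_extend_hook:
  assumes "admissible n p"
  shows "(promotion ^^ t) (extend n (hook p)) = extend n (hook ((promotion_step n ^^ t) p))"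
  by (induction t) (simp_all add: promotion_extend_hook admissible_funpow_promotion_step[OF assms])

lemma fst_funpow_promotion_step: "fst ((promotion_step n ^^ t) p) = (rot n ^^ t) ` fst p"
proof (induction t)
  case (Suc t)
  then show ?case
    by (cases "(promotion_step n ^^ t) p") (simp add: image_comp)
qed simp

lemma card_fst_funpow_promotion_step:
  assumes "admissible n p"
  shows "card (fst ((promotion_step n ^^ t) p)) = card (fst p)"
proof (induction t)
  case (Suc t)
  obtain S b where q: "(promotion_step n ^^ t) p = (S, b)" by fastforce
  then have "S \<subseteq> {2..n}" using admissible_funpow_promotion_step[OF assms, of t] by simp
  then show ?case using Suc q by (simp add: card_rot_image)
qed simp

definition rank_in :: "nat set \<Rightarrow> nat \<Rightarrow> nat" where
  "rank_in S b = card {x \<in> S. x < b}"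

lemma rank_in_strict_mono:
  "finite S \<Longrightarrow> x \<in> S \<Longrightarrow> x < y \<Longrightarrow> rank_in S x < rank_in S y"
  unfolding rank_in_def by (rule psubset_card_mono) auto

lemma rank_in_inject:
  assumes "finite S" "x \<in> S" "y \<in> S" "rank_in S x = rank_in S y"
  shows "x = y"
  using rank_in_strict_mono[OF assms(1,2), of y] rank_in_strict_mono[OF assms(1,3), of x] assms(4)
  by (cases x y rule: linorder_cases) auto

lemma rank_in_bounds:
  assumes "finite S" "b \<in> S" "a \<in> S" "a < b"
  shows "1 \<le> rank_in S b" "rank_in S b < card S"
proof -
  show "1 \<le> rank_in S b"
    using rank_in_strict_mono[OF assms(1,3,4)] by simp
  have "{x \<in> S. x < b} \<subset> S" using assms(2) by auto
  then show "rank_in S b < card S"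
    unfolding rank_in_def using assms(1) by (intro psubset_card_mono) auto
qed

lemma rank_in_Max:
  "finite S \<Longrightarrow> n \<in> S \<Longrightarrow> \<forall>x \<in> S. x \<le> n \<Longrightarrow> rank_in S n = card S - 1"
  unfolding rank_in_def
  by (subst card_Diff_singleton[symmetric]) (auto intro!: arg_cong[where f = card])

lemma rank_in_rot_image:
  assumes S: "S \<subseteq> {2..n}" and b: "b \<in> S" "b \<noteq> 2"
  shows "rank_in (rot n ` S) (b - 1) = rank_in S b - (if 2 \<in> S then 1 else 0)"
proof -
  have "{y \<in> rot n ` S. y < b - 1} = rot n ` ({x \<in> S. x < b} - {2})"
    using S b by (force simp: rot_def image_iff subset_iff)
  then have "rank_in (rot n ` S) (b - 1) = card (rot n ` ({x \<in> S. x < b} - {2}))"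
    unfolding rank_in_def by simp
  also have "\<dots> = card ({x \<in> S. x < b} - {2})"
    using S by (intro card_rot_image) auto
  also have "\<dots> = rank_in S b - (if 2 \<in> S then 1 else 0)"
    unfolding rank_in_def using S b finite_subset by (auto simp: card_Diff_singleton)
  finally show ?thesis .
qed

fun potential :: "nat \<Rightarrow> nat set \<times> nat \<Rightarrow> int" where
  "potential n (S, b) = (int n - 1) * int (rank_in S b) + (\<Sum>x \<in> S. int x)"

lemma potential_promotion_step:
  assumes adm: "admissible n (S, b)"
  shows "(int n - 1) * (int (card S) - 1) dvd
    potential n (promotion_step n (S, b)) + int (card S) - potential n (S, b)"
proof -
  from adm have S: "S \<subseteq> {2..n}" and b: "b \<in> S" and "\<exists>a \<in> S. a < b" by auto
  then obtain a where a: "a \<in> S" "a < b" by blast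
  have fin: "finite S" using S finite_subset by blast
  have "2 \<le> a" "b \<le> n" using a b S by auto
  then have "b \<noteq> 2" "1 \<le> n" using a(2) by auto
  have rank: "1 \<le> rank_in S b" using rank_in_bounds[OF fin b a] by simp
  have sum: "(\<Sum>x \<in> rot n ` S. int x) = (\<Sum>x \<in> S. int x) - int (card S) + (if 2 \<in> S then int n - 1 else 0)"
    using sum_rot_image[OF S] .
  show ?thesis
  proof (cases "2 \<in> S \<and> b = Min (S - {2})")
    case True
    have "\<forall>x \<in> S - {2}. b \<le> x" using True fin by simp
    then have "x = 2" if "x \<in> S" "x < b" for x using that by (meson DiffI not_le singletonD)
    moreover have "2 < b" "2 \<in> S" using b \<open>b \<noteq> 2\<close> S True by (fastforce, blast)
    ultimately have "{x \<in> S. x < b} = {2}" by blast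
    then have "rank_in S b = 1" by (simp add: rank_in_def)
    moreover have "rank_in (rot n ` S) n = card S - 1"
    proof -
      have "2 \<le> n" using \<open>2 < b\<close> \<open>b \<le> n\<close> by simp
      then have "\<forall>y \<in> rot n ` S. y \<le> n" using S rot_in_range by fastforce
      moreover have "n \<in> rot n ` S" using \<open>2 \<in> S\<close> image_eqI[of n "rot n" 2 S] by (simp add: rot_def)
      ultimately show ?thesis
        using rank_in_Max[OF finite_imageI[OF fin]] card_rot_image[OF S] by simp
    qed
    moreover have "1 \<le> card S" using b fin by (metis One_nat_def Suc_leI card_gt_0_iff empty_iff)
    ultimately have "potential n (promotion_step n (S, b)) + int (card S) - potential n (S, b) =
        (int n - 1) * (int (card S) - 1)"
      using True sum by (simp add: algebra_simps of_nat_diff)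
    then show ?thesis by simp
  next
    case False
    have "rank_in (rot n ` S) (b - 1) = rank_in S b - (if 2 \<in> S then 1 else 0)"
      using rank_in_rot_image[OF S b \<open>b \<noteq> 2\<close>] .
    then have "potential n (promotion_step n (S, b)) + int (card S) - potential n (S, b) = 0"
      using False sum rank by (cases "2 \<in> S") (simp_all add: algebra_simps)
    then show ?thesis by simp
  qed
qed

lemma potential_funpow_promotion_step:
  assumes adm: "admissible n p"
  shows "(int n - 1) * (int (card (fst p)) - 1) dvd
    potential n ((promotion_step n ^^ t) p) + int (card (fst p)) * int t - potential n p"
proof (induction t)
  case (Suc t)
  obtain S b where q: "(promotion_step n ^^ t) p = (S, b)" by fastforce
  have "admissible n (S, b)" "card S = card (fst p)"
    using admissible_funpow_promotion_step[OF adm, of t] card_fst_funpow_promotion_step[OF adm, of t] q by simp_all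
  then have "(int n - 1) * (int (card (fst p)) - 1) dvd
      potential n (promotion_step n (S, b)) + int (card (fst p)) - potential n (S, b)"
    using potential_promotion_step by metis
  from dvd_add[OF this Suc.IH] show ?case
    using q by (simp add: algebra_simps)
qed simp

lemma fst_funpow_promotion_step_period:
  assumes "admissible n p"
  shows "fst ((promotion_step n ^^ (k * (n - 1))) p) = fst p"
proof -
  obtain S b where p: "p = (S, b)" by fastforce
  then have S: "S \<subseteq> {2..n}" using assms by simp
  have "fst ((promotion_step n ^^ (k * (n - 1))) p) = (rot n ^^ (k * (n - 1))) ` S"
    unfolding fst_funpow_promotion_step p by simp
  also have "\<dots> = id ` S"
    using funpow_rot_mult_period subsetD[OF S] by (intro image_cong) auto
  finally show ?thesis using p by simp
qed

lemma eq_if_dvd_diff_less: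
  fixes r r' m :: nat
  assumes "1 \<le> r" "r < m" "1 \<le> r'" "r' < m" "int m - 1 dvd int r' - int r"
  shows "r' = r"
proof (rule ccontr)
  assume "r' \<noteq> r"
  then have "\<bar>int m - 1\<bar> \<le> \<bar>int r' - int r\<bar>"
    using dvd_imp_le_int[OF _ assms(5)] by simp
  with assms(1-4) show False by linarith
qed

lemma funpow_promotion_step_period:
  assumes adm: "admissible n p"
  shows "(promotion_step n ^^ ((card (fst p) - 1) * (n - 1))) p = p"
proof -
  obtain S b where p: "p = (S, b)" by fastforce
  define m where "m = card S"
  define N where "N = (m - 1) * (n - 1)"
  obtain b' where q: "(promotion_step n ^^ N) p = (S, b')"
    using fst_funpow_promotion_step_period[OF adm, of "m - 1"] unfolding N_def p
    by (metis fst_conv prod.collapse)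
  from adm have S: "S \<subseteq> {2..n}" and b: "b \<in> S" and "\<exists>a \<in> S. a < b" unfolding p by auto
  then obtain a where a: "a \<in> S" "a < b" by blast
  have fin: "finite S" using S finite_subset by blast
  have "admissible n (S, b')" using admissible_funpow_promotion_step[OF adm, of N] q by simp
  then obtain a' where b': "b' \<in> S" "a' \<in> S" "a' < b'" by auto
  have "card {a, b} \<le> m" unfolding m_def using fin a b by (intro card_mono) auto
  then have m: "2 \<le> m" using a(2) by simp
  have "2 \<le> a" "b \<le> n" using a b S by auto
  then have n: "3 \<le> n" using a(2) by simp
  define M where "M = (int n - 1) * (int m - 1)"
  have "M dvd potential n (S, b') + int m * int N - potential n (S, b)"
    using potential_funpow_promotion_step[OF adm, of N] q unfolding p M_def m_def by simp
  moreover have "M dvd int m * int N" using m n by (simp add: M_def N_def of_nat_diff)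
  ultimately have "M dvd potential n (S, b') + int m * int N - potential n (S, b) - int m * int N"
    by (rule dvd_diff)
  then have "(int n - 1) * (int m - 1) dvd (int n - 1) * (int (rank_in S b') - int (rank_in S b))"
    unfolding M_def by (simp add: algebra_simps)
  then have "int m - 1 dvd int (rank_in S b') - int (rank_in S b)" using n by simp
  with rank_in_bounds[OF fin b a] rank_in_bounds[OF fin b'] have "rank_in S b' = rank_in S b"
    unfolding m_def by (intro eq_if_dvd_diff_less) auto
  then have "b' = b" using rank_in_inject[OF fin b'(1) b] by blast
  then show ?thesis using q unfolding p N_def m_def by simp
qed

section \<open>Tableaux of shape (2,1^k)\<close>

lemma shape_2_1sE:
  assumes "shape_2_1s T"
  obtains a b cs where "T = [a, b] # map (\<lambda>z. [z]) cs"
proof -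
  obtain r rs where T: "T = r # rs" using assms by (cases T) (auto simp: shape_2_1s_def)
  have "length r = 2" using assms by (simp add: shape_2_1s_def T)
  then obtain a b where r: "r = [a, b]" by (metis One_nat_def length_0_conv length_Suc_conv numeral_2_eq_2)
  have singleton: "length x = 1" if "x \<in> set rs" for x
    using that assms by (auto simp: shape_2_1s_def T in_set_conv_nth)
  have "[hd x] = x" if "x \<in> set rs" for x
    using singleton[OF that] by (cases x) auto
  then have "map (\<lambda>z. [z]) (map hd rs) = rs" by (simp add: map_idI)
  then show ?thesis using that T r by metis
qed

lemma is_tableau_2_1s_D:
  assumes "is_tableau ([a, b] # map (\<lambda>z. [z]) cs)" (is "is_tableau ?T")
  shows "sorted_wrt (<) (a # cs)" "a < b" "distinct (a # b # cs)"
proof -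
  have "?T ! i ! 0 < ?T ! Suc i ! 0" if "Suc i < length ?T" for i
  proof -
    have "0 < length (?T ! Suc i)" using that by simp
    then show ?thesis using assms that unfolding is_tableau_def by (metis Suc_eq_plus1)
  qed
  moreover have "?T ! i ! 0 = (a # cs) ! i" if "i < length ?T" for i
    using that by (cases i) auto
  ultimately have "(a # cs) ! i < (a # cs) ! Suc i" if "Suc i < length (a # cs)" for i
    using that by (metis Suc_lessD length_Cons length_map)
  then show "sorted_wrt (<) (a # cs)"
    by (subst sorted_wrt_iff_nth_Suc_transp) auto
  have "sorted_wrt (<) (?T ! 0)" using assms unfolding is_tableau_def by blast
  then show "a < b" by simp
  show "distinct (a # b # cs)" using assms unfolding is_tableau_def by simp
qed

lemma is_SYT_extend_corner_gt_1:
  assumes syt: "is_SYT n (extend n T)" and "T \<noteq> []" "T ! 0 \<noteq> []"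
  shows "1 < T ! 0 ! 0"
proof -
  define top where "top = sorted_list_of_set ({1..n} - entries T)"
  have ext: "extend n T = top # T" unfolding extend_def top_def ..
  then have tab: "is_tableau (top # T)" and ent: "entries (top # T) = {1..n}"
    using syt unfolding is_SYT_def by auto
  have "\<forall>r. r + 1 < length (top # T) \<longrightarrow> length ((top # T) ! (r + 1)) \<le> length ((top # T) ! r)"
    using tab unfolding is_tableau_def partition_shape_def by blast
  then have "length (T ! 0) \<le> length top" using assms(2) by (auto dest: spec[of _ 0])
  then have "top \<noteq> []" using assms(3) by auto
  then have "top ! 0 \<in> {1..n}" using ent unfolding entries_def by (auto intro: nth_mem)
  moreover have "\<forall>r c. r + 1 < length (top # T) \<and> c < length ((top # T) ! (r + 1)) \<longrightarrow>
      (top # T) ! r ! c < (top # T) ! (r + 1) ! c"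
    using tab unfolding is_tableau_def by blast
  then have "top ! 0 < T ! 0 ! 0" using assms(2,3) by (auto dest: spec[of _ 0])
  ultimately show ?thesis by simp
qed

lemma shape_2_1s_hookE:
  assumes "is_tableau T" "shape_2_1s T" "is_SYT n (extend n T)"
  obtains a b where "hook (entries T, b) = T" "entries T \<subseteq> {2..n}" "a \<in> entries T" "b \<in> entries T" "a < b"
proof -
  obtain a b cs where T: "T = [a, b] # map (\<lambda>z. [z]) cs" using shape_2_1sE[OF assms(2)] .
  note shape = is_tableau_2_1s_D[OF assms(1)[unfolded T]]
  have ent: "entries T = insert b (set (a # cs))" unfolding T entries_def by auto
  have "sorted_list_of_set (entries T - {b}) = a # cs"
    using shape unfolding ent by (intro sorted_list_of_set_eqI) auto
  then have "hook (entries T, b) = T" unfolding T by (rule hook_eq)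
  have "entries T \<subseteq> {1..n}"
    using assms(3) unfolding is_SYT_def extend_def entries_def by auto
  moreover have "1 < a" using is_SYT_extend_corner_gt_1[OF assms(3)] T by simp
  moreover have "\<forall>x \<in> entries T. a \<le> x" using shape unfolding ent by (auto simp: less_imp_le)
  ultimately have "entries T \<subseteq> {2..n}" by force
  then show ?thesis using that[of b a] \<open>hook (entries T, b) = T\<close> ent shape(2) by simp
qed

lemma rot_notin_if_separated:
  assumes "S \<subseteq> {2..n}" "\<forall>x \<in> S. \<forall>y \<in> S. x \<noteq> y \<longrightarrow> x + 2 \<le> y \<or> y + 2 \<le> x"
    and "\<not> (2 \<in> S \<and> n \<in> S)"
  shows "\<forall>x \<in> S. rot n x \<notin> S"
proof
  fix x assume "x \<in> S"
  show "rot n x \<notin> S"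
  proof (cases "x = 2")
    case True
    then show ?thesis using assms(3) \<open>x \<in> S\<close> by (simp add: rot_def)
  next
    case False
    have "2 \<le> x" using assms(1) \<open>x \<in> S\<close> by auto
    then have "rot n x = x - 1" "x \<noteq> x - 1" using False by (auto simp: rot_def)
    moreover have "\<not> (x + 2 \<le> x - 1 \<or> x - 1 + 2 \<le> x)" by arith
    ultimately show ?thesis using assms(2) \<open>x \<in> S\<close> by metis
  qed
qed

theorem proposition6p1:
  fixes T :: tableau and n :: nat
  assumes "is_tableau T"
    and "shape_2_1s T"
    and "tsize T \<ge> 2"
    and "\<forall>x \<in> entries T. x > 0"
    and "is_SYT n (extend n T)"
    and "\<forall>x \<in> entries T. \<forall>y \<in> entries T. x \<noteq> y \<longrightarrow> x + 2 \<le> y \<or> y + 2 \<le> x"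
    and "\<not> (2 \<in> entries T \<and> n \<in> entries T)"
  shows "pr (extend n T) dvd (tsize T - 1) * (n - 1)"
proof -
  obtain a b where T: "hook (entries T, b) = T" and S: "entries T \<subseteq> {2..n}"
    and ab: "a \<in> entries T" "b \<in> entries T" "a < b"
    using shape_2_1s_hookE[OF assms(1,2,5)] .
  have adm: "admissible n (entries T, b)"
    using S ab rot_notin_if_separated[OF S assms(6,7)] by auto
  have "tsize T = card (entries T)"
    using assms(1) distinct_card unfolding is_tableau_def tsize_def entries_def by fastforce
  then have "(promotion ^^ ((tsize T - 1) * (n - 1))) (extend n T) = extend n T"
    using funpow_promotion_extend_hook[OF adm] funpow_promotion_step_period[OF adm] T by simp
  moreover have "0 < (tsize T - 1) * (n - 1)" using assms(3) S ab by auto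
  ultimately show ?thesis unfolding pr_def by (rule Least_funpow_period_dvd[rotated])
qed

end
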